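(* Let $\mathbf A$ be an algebra, $n\ge2$, $I$ a nonempty set, and $\rho_i$ ($i\in I$) and $\alpha_0,\dots,\alpha_{n-2}$ congruences of $\mathbf A$. Then \[ \Big[\alpha_0,\dots,\alpha_{n-2},\bigvee_{i\in I}\rho_i\Big]=\bigvee_{J}\Big[\alpha_0,\dots,\alpha_{n-2},\bigvee_{i\in J}\rho_i\Big], \] where $J$ ranges over all finite nonempty subsets of $I$.
   Context: Higher commutator (Bulatov): for congruences $\alpha_0,\dots,\alpha_{n-1},\gamma$ of an algebra $\mathbf A$, say $\alpha_0,\dots,\alpha_{n-2}$ centralize $\alpha_{n-1}$ modulo $\gamma$ if for all tuples $\mathbf a_i,\mathbf b_i$ ($i<n$, with $\mathbf a_i\neq\mathbf b_i$ congruent modulo $\alpha_i$ coordinatewise) and every term operation $t$ such that $t(\mathbf x_0,\dots,\mathbf x_{n-2},\mathbf a_{n-1})\equiv_\gamma t(\mathbf x_0,\dots,\mathbf x_{n-2},\mathbf b_{n-1})$ for all $(\mathbf x_0,\dots,\mathbf x_{n-2})\in(\{\mathbf a_0,\mathbf b_0\}\times\dots\times\{\mathbf a_{n-2},\mathbf b_{n-2}\})\setminus\{(\mathbf b_0,\dots,\mathbf b_{n-2})\}$, we have $t(\mathbf b_0,\dots,\mathbf b_{n-2},\mathbf a_{n-1})\equiv_\gamma t(\mathbf b_0,\dots,\mathbf b_{n-2},\mathbf b_{n-1})$. $[\alpha_0,\dots,\alpha_{n-1}]$ is the smallest congruence $\gamma$ such that $\alpha_0,\dots,\alpha_{n-2}$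 centralize $\alpha_{n-1}$ modulo $\gamma$. *)

theory Defs
  imports Main
begin

definition algebra :: "'a set \<Rightarrow> ('f \<Rightarrow> nat) \<Rightarrow> ('f \<Rightarrow> 'a list \<Rightarrow> 'a) \<Rightarrow> bool" where
  "algebra A ar F \<longleftrightarrow>
     (\<forall>f xs. length xs = ar f \<and> set xs \<subseteq> A \<longrightarrow> F f xs \<in> A)"

datatype 'f trm = Var nat | Op 'f "'f trm list"

fun wf_trm :: "('f \<Rightarrow> nat) \<Rightarrow> 'f trm \<Rightarrow> bool" where
  "wf_trm ar (Var i) = True"
| "wf_trm ar (Op f ts) = (length ts = ar f \<and> (\<forall>t\<in>set ts. wf_trm ar t))"

fun vars_trm :: "'f trm \<Rightarrow> nat set" where
  "vars_trm (Var i) = {i}"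
| "vars_trm (Op f ts) = (\<Union>t\<in>set ts. vars_trm t)"

fun eval_trm :: "('f \<Rightarrow> 'a list \<Rightarrow> 'a) \<Rightarrow> 'f trm \<Rightarrow> (nat \<Rightarrow> 'a) \<Rightarrow> 'a" where
  "eval_trm F (Var i) env = env i"
| "eval_trm F (Op f ts) env = F f (map (\<lambda>t. eval_trm F t env) ts)"

definition term_ops :: "('f \<Rightarrow> nat) \<Rightarrow> ('f \<Rightarrow> 'a list \<Rightarrow> 'a) \<Rightarrow> nat \<Rightarrow> ('a list \<Rightarrow> 'a) set" where
  "term_ops ar F k = {(\<lambda>xs. eval_trm F t (\<lambda>i. xs ! i)) | t. wf_trm ar t \<and> vars_trm t \<subseteq> {..<k}}"

definition congruence :: "'a set \<Rightarrow> ('f \<Rightarrow> nat) \<Rightarrow> ('f \<Rightarrow> 'a list \<Rightarrow> 'a) \<Rightarrow> 'a rel \<Rightarrow> bool" where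
  "congruence A ar F \<theta> \<longleftrightarrow> equiv A \<theta> \<and>
     (\<forall>f xs ys. length xs = ar f \<and> list_all2 (\<lambda>x y. (x, y) \<in> \<theta>) xs ys
        \<longrightarrow> (F f xs, F f ys) \<in> \<theta>)"

definition cg_join :: "'a set \<Rightarrow> ('f \<Rightarrow> nat) \<Rightarrow> ('f \<Rightarrow> 'a list \<Rightarrow> 'a) \<Rightarrow> 'a rel set \<Rightarrow> 'a rel" where
  "cg_join A ar F S = \<Inter>{\<theta>. congruence A ar F \<theta> \<and> \<Union>S \<subseteq> \<theta>}"

definition sel_args :: "nat \<Rightarrow> 'a list list \<Rightarrow> 'a list list \<Rightarrow> (nat \<Rightarrow> bool) \<Rightarrow> 'a list \<Rightarrow> 'a list" where
  "sel_args n as bs s lst =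
     concat (map (\<lambda>i. if s i then bs ! i else as ! i) [0..<n - 1]) @ lst"

text \<open>alphas = [alpha_0,...,alpha_(n-1)]; alpha_0..alpha_(n-2) centralize
  alpha_(n-1) modulo gamma.\<close>
definition centralizes ::
  "'a set \<Rightarrow> ('f \<Rightarrow> nat) \<Rightarrow> ('f \<Rightarrow> 'a list \<Rightarrow> 'a) \<Rightarrow> 'a rel list \<Rightarrow> 'a rel \<Rightarrow> bool" where
  "centralizes A ar F alphas \<gamma> \<longleftrightarrow>
    (let n = length alphas in
     \<forall>as bs. length as = n \<and> length bs = n \<and>
       (\<forall>i<n. as ! i \<noteq> bs ! i \<and> length (as ! i) = length (bs ! i) \<and>
              set (as ! i) \<subseteq> A \<and> set (bs ! i) \<subseteq> A \<and>
              list_all2 (\<lambda>x y. (x, y) \<in> alphas ! i) (as ! i) (bs ! i)) \<longrightarrow>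
     (\<forall>t \<in> term_ops ar F (sum_list (map length as)).
        (\<forall>s. \<not> (\<forall>i<n - 1. s i) \<longrightarrow>
           (t (sel_args n as bs s (as ! (n - 1))), t (sel_args n as bs s (bs ! (n - 1)))) \<in> \<gamma>)
        \<longrightarrow> (t (sel_args n as bs (\<lambda>_. True) (as ! (n - 1))),
             t (sel_args n as bs (\<lambda>_. True) (bs ! (n - 1)))) \<in> \<gamma>))"

definition hcomm :: "'a set \<Rightarrow> ('f \<Rightarrow> nat) \<Rightarrow> ('f \<Rightarrow> 'a list \<Rightarrow> 'a) \<Rightarrow> 'a rel list \<Rightarrow> 'a rel" where
  "hcomm A ar F alphas = \<Inter>{\<gamma>. congruence A ar F \<gamma> \<and> centralizes A ar F alphas \<gamma>}"

end

theory Submission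
  imports Defs
begin

text \<open>The join of the \<open>\<rho>\<^sub>i\<close> is the directed union of the joins over finite \<open>J \<subseteq> I\<close>.
  An instance of the centralizing condition (tuples \<open>a\<^sub>i, b\<^sub>i\<close> and a term \<open>t\<close>) involves only
  finitely many pairs: the coordinates of \<open>a\<^sub>n\<^sub>-\<^sub>1, b\<^sub>n\<^sub>-\<^sub>1\<close> and the \<open>2\<^sup>n\<^sup>-\<^sup>1 - 1\<close> hypothesis pairs.
  So each instance for the join over \<open>I\<close>, taken modulo the directed union of the commutators
  for finite \<open>J\<close>, is already an instance for a single large enough \<open>J\<close>. Hence that union is a
  congruence modulo which \<open>\<alpha>\<^sub>0, \<dots>, \<alpha>\<^sub>n\<^sub>-\<^sub>2\<close> centralize the join over \<open>I\<close>, which gives one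
  inclusion; the other is monotonicity of the commutator in its last argument.\<close>

definition directed :: "'x set set \<Rightarrow> bool" where
  "directed \<S> \<longleftrightarrow> (\<forall>X\<in>\<S>. \<forall>Y\<in>\<S>. \<exists>Z\<in>\<S>. X \<subseteq> Z \<and> Y \<subseteq> Z)"

lemma finite_subset_Union_directed:
  assumes "directed \<S>" and "\<S> \<noteq> {}" and "finite P" and "P \<subseteq> \<Union>\<S>"
  shows "\<exists>X\<in>\<S>. P \<subseteq> X"
  using \<open>finite P\<close> \<open>P \<subseteq> \<Union>\<S>\<close>
proof (induction P rule: finite_induct)
  case empty
  then show ?case using \<open>\<S> \<noteq> {}\<close> by blast
next
  case (insert p P)
  then obtain X Y where "X \<in> \<S>" "P \<subseteq> X" "Y \<in> \<S>" "p \<in> Y" by blast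
  with \<open>directed \<S>\<close> obtain Z where "Z \<in> \<S>" "X \<subseteq> Z" "Y \<subseteq> Z"
    unfolding directed_def by blast
  with \<open>P \<subseteq> X\<close> \<open>p \<in> Y\<close> show ?case by blast
qed

lemma directed_image_mono_on:
  assumes "directed K" and "mono_on K f"
  shows "directed (f ` K)"
  unfolding directed_def
proof (intro ballI)
  fix X Y assume "X \<in> f ` K" "Y \<in> f ` K"
  then obtain x y where "x \<in> K" "y \<in> K" "X = f x" "Y = f y" by blast
  with \<open>directed K\<close> obtain z where "z \<in> K" "x \<subseteq> z" "y \<subseteq> z"
    unfolding directed_def by blast
  with \<open>X = f x\<close> \<open>Y = f y\<close> \<open>x \<in> K\<close> \<open>y \<in> K\<close> \<open>mono_on K f\<close>
  show "\<exists>Z\<in>f ` K. X \<subseteq> Z \<and> Y \<subseteq> Z"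
    by (metis image_eqI mono_onD)
qed

lemma directed_finite_subsets: "directed {J. finite J \<and> J \<noteq> {} \<and> J \<subseteq> I}"
  unfolding directed_def by (intro ballI bexI[where x = "_ \<union> _"]) auto

lemma congruence_Union_directed:
  assumes "directed \<S>" and "\<S> \<noteq> {}" and cong: "\<forall>\<theta>\<in>\<S>. congruence A ar F \<theta>"
  shows "congruence A ar F (\<Union>\<S>)"
proof -
  have equiv: "\<And>\<theta>. \<theta> \<in> \<S> \<Longrightarrow> equiv A \<theta>" using cong by (simp add: congruence_def)
  have "equiv A (\<Union>\<S>)"
  proof (rule equivI)
    show "\<Union>\<S> \<subseteq> A \<times> A" using equiv equiv_type by blast
    show "refl_on A (\<Union>\<S>)"
      using equiv \<open>\<S> \<noteq> {}\<close> by (fastforce simp: equiv_def refl_on_def)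
    show "sym (\<Union>\<S>)"
      using equiv by (fastforce simp: equiv_def sym_def)
    show "trans (\<Union>\<S>)"
    proof (rule transI)
      fix x y z assume "(x, y) \<in> \<Union>\<S>" "(y, z) \<in> \<Union>\<S>"
      then obtain \<theta> where "\<theta> \<in> \<S>" "{(x, y), (y, z)} \<subseteq> \<theta>"
        using finite_subset_Union_directed[OF \<open>directed \<S>\<close> \<open>\<S> \<noteq> {}\<close>, of "{(x, y), (y, z)}"]
        by blast
      with equiv[of \<theta>] show "(x, z) \<in> \<Union>\<S>" unfolding equiv_def trans_def by blast
    qed
  qed
  moreover have "(F f xs, F f ys) \<in> \<Union>\<S>"
    if "length xs = ar f" and "list_all2 (\<lambda>x y. (x, y) \<in> \<Union>\<S>) xs ys" for f xs ys
  proof -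
    from that(2) have "set (zip xs ys) \<subseteq> \<Union>\<S>" by (auto simp: list_all2_iff)
    then obtain \<theta> where "\<theta> \<in> \<S>" "set (zip xs ys) \<subseteq> \<theta>"
      using finite_subset_Union_directed[OF \<open>directed \<S>\<close> \<open>\<S> \<noteq> {}\<close>] by blast
    with that(2) have "list_all2 (\<lambda>x y. (x, y) \<in> \<theta>) xs ys"
      by (auto simp: list_all2_iff)
    with that(1) cong \<open>\<theta> \<in> \<S>\<close> have "(F f xs, F f ys) \<in> \<theta>"
      by (simp add: congruence_def)
    with \<open>\<theta> \<in> \<S>\<close> show ?thesis by blast
  qed
  ultimately show ?thesis by (simp add: congruence_def)
qed

lemma congruence_Inter:
  assumes "G \<noteq> {}" and cong: "\<forall>\<theta>\<in>G. congruence A ar F \<theta>"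
  shows "congruence A ar F (\<Inter>G)"
proof -
  have equiv: "\<And>\<theta>. \<theta> \<in> G \<Longrightarrow> equiv A \<theta>" using cong by (simp add: congruence_def)
  have "equiv A (\<Inter>G)"
  proof (rule equivI)
    show "\<Inter>G \<subseteq> A \<times> A" using equiv equiv_type \<open>G \<noteq> {}\<close> by blast
    show "refl_on A (\<Inter>G)"
      using equiv \<open>G \<noteq> {}\<close> by (fastforce simp: equiv_def refl_on_def)
    show "sym (\<Inter>G)"
      using equiv by (fastforce simp: equiv_def sym_def)
    show "trans (\<Inter>G)"
      using equiv by (fastforce simp: equiv_def trans_def)
  qed
  moreover have "(F f xs, F f ys) \<in> \<Inter>G"
    if "length xs = ar f" and "list_all2 (\<lambda>x y. (x, y) \<in> \<Inter>G) xs ys" for f xs ys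
  proof
    fix \<theta> assume "\<theta> \<in> G"
    with that(2) have "list_all2 (\<lambda>x y. (x, y) \<in> \<theta>) xs ys" by (auto elim: list_all2_mono)
    with that(1) cong \<open>\<theta> \<in> G\<close> show "(F f xs, F f ys) \<in> \<theta>" by (simp add: congruence_def)
  qed
  ultimately show ?thesis by (simp add: congruence_def)
qed

lemma congruence_total:
  assumes "algebra A ar F"
  shows "congruence A ar F (A \<times> A)"
  unfolding congruence_def
proof (intro conjI allI impI)
  show "equiv A (A \<times> A)" by (auto simp: equiv_def refl_on_def sym_def trans_def)
  fix f xs ys assume "length xs = ar f \<and> list_all2 (\<lambda>x y. (x, y) \<in> A \<times> A) xs ys"
  then have "length xs = ar f" "length ys = ar f" "set xs \<subseteq> A" "set ys \<subseteq> A"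
    by (auto simp: list_all2_conv_all_nth in_set_conv_nth)
  with assms show "(F f xs, F f ys) \<in> A \<times> A" unfolding algebra_def by auto
qed

lemma congruence_cg_join:
  assumes "algebra A ar F" and "\<Union>S \<subseteq> A \<times> A"
  shows "congruence A ar F (cg_join A ar F S)"
  unfolding cg_join_def
proof (rule congruence_Inter)
  show "{\<theta>. congruence A ar F \<theta> \<and> \<Union>S \<subseteq> \<theta>} \<noteq> {}"
    using assms congruence_total by blast
qed blast

lemma cg_join_least: "congruence A ar F \<theta> \<Longrightarrow> \<Union>S \<subseteq> \<theta> \<Longrightarrow> cg_join A ar F S \<subseteq> \<theta>"
  unfolding cg_join_def by blast

lemma cg_join_upper: "\<Union>S \<subseteq> cg_join A ar F S"
  unfolding cg_join_def by blast

lemma cg_join_mono: "S \<subseteq> T \<Longrightarrow> cg_join A ar F S \<subseteq> cg_join A ar F T"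
  unfolding cg_join_def by blast

lemma mono_on_cg_join_image: "mono_on K (\<lambda>J. cg_join A ar F (\<rho> ` J))"
  by (rule mono_onI) (intro cg_join_mono image_mono)

lemma finite_subsets_nonempty:
  assumes "I \<noteq> {}"
  shows "{J. finite J \<and> J \<noteq> {} \<and> J \<subseteq> I} \<noteq> {}"
proof -
  from assms obtain i where "i \<in> I" by blast
  then have "{i} \<in> {J. finite J \<and> J \<noteq> {} \<and> J \<subseteq> I}" by simp
  then show ?thesis by blast
qed

lemma cg_join_eq_Union_finite:
  assumes "algebra A ar F" and "I \<noteq> {}" and cong: "\<forall>i\<in>I. congruence A ar F (\<rho> i)"
  shows "cg_join A ar F (\<rho> ` I) =
           (\<Union>J\<in>{J. finite J \<and> J \<noteq> {} \<and> J \<subseteq> I}. cg_join A ar F (\<rho> ` J))"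
    (is "_ = \<Union>(?B ` ?K)")
proof
  have "\<rho> i \<subseteq> A \<times> A" if "i \<in> I" for i
    using that cong equiv_type unfolding congruence_def by blast
  then have "\<forall>J\<in>?K. congruence A ar F (?B J)"
    by (blast intro: congruence_cg_join[OF \<open>algebra A ar F\<close>])
  moreover have "directed (?B ` ?K)"
    by (rule directed_image_mono_on[OF directed_finite_subsets mono_on_cg_join_image])
  moreover have "?B ` ?K \<noteq> {}"
    using finite_subsets_nonempty[OF \<open>I \<noteq> {}\<close>] by blast
  ultimately have "congruence A ar F (\<Union>(?B ` ?K))"
    by (intro congruence_Union_directed) auto
  moreover have "\<rho> i \<subseteq> \<Union>(?B ` ?K)" if "i \<in> I" for i
  proof -
    from that have "{i} \<in> ?K" by simp
    then show ?thesis using cg_join_upper[of "\<rho> ` {i}" A ar F] by blast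
  qed
  ultimately show "?B I \<subseteq> \<Union>(?B ` ?K)" by (intro cg_join_least UN_least)
  show "\<Union>(?B ` ?K) \<subseteq> ?B I"
  proof (rule UN_least)
    show "?B J \<subseteq> ?B I" if "J \<in> ?K" for J
      using that by (intro cg_join_mono image_mono) simp
  qed
qed

definition comm_tuples :: "'a set \<Rightarrow> 'a rel list \<Rightarrow> 'a list list \<Rightarrow> 'a list list \<Rightarrow> bool" where
  "comm_tuples A alphas as bs \<longleftrightarrow>
     length as = length alphas \<and> length bs = length alphas \<and>
     (\<forall>i<length alphas. as ! i \<noteq> bs ! i \<and> length (as ! i) = length (bs ! i) \<and>
        set (as ! i) \<subseteq> A \<and> set (bs ! i) \<subseteq> A \<and>
        list_all2 (\<lambda>x y. (x, y) \<in> alphas ! i) (as ! i) (bs ! i))"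

definition comm_pair ::
  "('a list \<Rightarrow> 'a) \<Rightarrow> nat \<Rightarrow> 'a list list \<Rightarrow> 'a list list \<Rightarrow> (nat \<Rightarrow> bool) \<Rightarrow> 'a \<times> 'a" where
  "comm_pair t n as bs s = (t (sel_args n as bs s (as ! (n - 1))), t (sel_args n as bs s (bs ! (n - 1))))"

lemma centralizesI:
  assumes "\<And>as bs t. comm_tuples A alphas as bs \<Longrightarrow> t \<in> term_ops ar F (sum_list (map length as)) \<Longrightarrow>
      (\<And>s. \<not> (\<forall>i<length alphas - 1. s i) \<Longrightarrow> comm_pair t (length alphas) as bs s \<in> \<gamma>) \<Longrightarrow>
      comm_pair t (length alphas) as bs (\<lambda>_. True) \<in> \<gamma>"
  shows "centralizes A ar F alphas \<gamma>"
  using assms unfolding centralizes_def comm_tuples_def comm_pair_def Let_def by blast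

lemma centralizesD:
  assumes "centralizes A ar F alphas \<gamma>" and "comm_tuples A alphas as bs"
    and "t \<in> term_ops ar F (sum_list (map length as))"
    and "\<And>s. \<not> (\<forall>i<length alphas - 1. s i) \<Longrightarrow> comm_pair t (length alphas) as bs s \<in> \<gamma>"
  shows "comm_pair t (length alphas) as bs (\<lambda>_. True) \<in> \<gamma>"
  using assms unfolding centralizes_def comm_tuples_def comm_pair_def Let_def by blast

lemma comm_tuples_snoc_last:
  "comm_tuples A (alphas @ [\<beta>]) as bs \<Longrightarrow>
     list_all2 (\<lambda>x y. (x, y) \<in> \<beta>) (as ! length alphas) (bs ! length alphas)"
  unfolding comm_tuples_def by (metis length_append_singleton lessI nth_append_length)

lemma comm_tuples_snoc_replace:
  assumes "comm_tuples A (alphas @ [\<beta>]) as bs"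
    and "list_all2 (\<lambda>x y. (x, y) \<in> \<beta>') (as ! length alphas) (bs ! length alphas)"
  shows "comm_tuples A (alphas @ [\<beta>']) as bs"
  using assms unfolding comm_tuples_def by (auto simp: nth_append less_Suc_eq)

lemma finite_comm_pairs: "finite {comm_pair t n as bs s | s. P s}"
proof -
  let ?pair = "\<lambda>S. comm_pair t n as bs (\<lambda>i. i \<in> S)"
  have "comm_pair t n as bs s = ?pair {i. i < n - 1 \<and> s i}" for s
  proof -
    have "map (\<lambda>i. if s i then bs ! i else as ! i) [0..<n - 1] =
          map (\<lambda>i. if i \<in> {i. i < n - 1 \<and> s i} then bs ! i else as ! i) [0..<n - 1]"
      by (rule map_cong) auto
    then show ?thesis by (simp only: comm_pair_def sel_args_def)
  qed
  then have "{comm_pair t n as bs s | s. P s} \<subseteq> ?pair ` Pow {..<n - 1}"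
    by blast
  then show ?thesis by (rule finite_subset) simp
qed

lemma centralizes_Inter:
  "\<forall>\<gamma>\<in>G. centralizes A ar F alphas \<gamma> \<Longrightarrow> centralizes A ar F alphas (\<Inter>G)"
  by (rule centralizesI) (blast intro: centralizesD)

lemma centralizes_hcomm: "centralizes A ar F alphas (hcomm A ar F alphas)"
  unfolding hcomm_def by (rule centralizes_Inter) blast

text \<open>\<open>hcomm\<close> is an intersection, so it is \<open>UNIV\<close> when no congruence qualifies.\<close>

lemma hcomm_congruence_or_UNIV:
  "congruence A ar F (hcomm A ar F alphas) \<or> hcomm A ar F alphas = UNIV"
proof (cases "{\<gamma>. congruence A ar F \<gamma> \<and> centralizes A ar F alphas \<gamma>} = {}")
  case False
  then have "congruence A ar F (hcomm A ar F alphas)"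
    unfolding hcomm_def by (rule congruence_Inter) blast
  then show ?thesis ..
next
  case True
  then have "hcomm A ar F alphas = UNIV" unfolding hcomm_def by (simp only: Inter_empty)
  then show ?thesis ..
qed

lemma centralizes_antimono_last:
  assumes "\<beta> \<subseteq> \<beta>'" and "centralizes A ar F (alphas @ [\<beta>']) \<gamma>"
  shows "centralizes A ar F (alphas @ [\<beta>]) \<gamma>"
proof (rule centralizesI)
  fix as bs t
  assume tuples: "comm_tuples A (alphas @ [\<beta>]) as bs"
    and "t \<in> term_ops ar F (sum_list (map length as))"
    and "\<And>s. \<not> (\<forall>i<length (alphas @ [\<beta>]) - 1. s i) \<Longrightarrow>
           comm_pair t (length (alphas @ [\<beta>])) as bs s \<in> \<gamma>"
  moreover have "comm_tuples A (alphas @ [\<beta>']) as bs"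
    using comm_tuples_snoc_last[OF tuples] \<open>\<beta> \<subseteq> \<beta>'\<close>
    by (blast intro: comm_tuples_snoc_replace[OF tuples] list_all2_mono)
  ultimately show "comm_pair t (length (alphas @ [\<beta>])) as bs (\<lambda>_. True) \<in> \<gamma>"
    using centralizesD[OF assms(2)] by simp
qed

lemma hcomm_mono_last:
  "\<beta> \<subseteq> \<beta>' \<Longrightarrow> hcomm A ar F (alphas @ [\<beta>]) \<subseteq> hcomm A ar F (alphas @ [\<beta>'])"
  unfolding hcomm_def using centralizes_antimono_last by blast

lemma centralizes_Union_directed:
  fixes K :: "'j set set" and B \<Gamma> :: "'j set \<Rightarrow> 'a rel"
  assumes "directed K" and "K \<noteq> {}" and "mono_on K B" and "mono_on K \<Gamma>"
    and "\<beta> \<subseteq> \<Union>(B ` K)" and cen: "\<forall>J\<in>K. centralizes A ar F (alphas @ [B J]) (\<Gamma> J)"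
  shows "centralizes A ar F (alphas @ [\<beta>]) (\<Union>(\<Gamma> ` K))"
proof (rule centralizesI)
  fix as bs t
  let ?m = "length alphas"
  assume tuples: "comm_tuples A (alphas @ [\<beta>]) as bs"
    and t: "t \<in> term_ops ar F (sum_list (map length as))"
    and hyps: "\<And>s. \<not> (\<forall>i<length (alphas @ [\<beta>]) - 1. s i) \<Longrightarrow>
                 comm_pair t (length (alphas @ [\<beta>])) as bs s \<in> \<Union>(\<Gamma> ` K)"
  have last: "list_all2 (\<lambda>x y. (x, y) \<in> \<beta>) (as ! ?m) (bs ! ?m)"
    by (rule comm_tuples_snoc_last[OF tuples])
  then have "set (zip (as ! ?m) (bs ! ?m)) \<subseteq> \<Union>(B ` K)"
    using \<open>\<beta> \<subseteq> \<Union>(B ` K)\<close> by (auto simp: list_all2_iff)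
  moreover have "directed (B ` K)" "directed (\<Gamma> ` K)"
    using directed_image_mono_on \<open>directed K\<close> \<open>mono_on K B\<close> \<open>mono_on K \<Gamma>\<close> by auto
  moreover have "B ` K \<noteq> {}" "\<Gamma> ` K \<noteq> {}" using \<open>K \<noteq> {}\<close> by auto
  ultimately obtain J\<^sub>0 where "J\<^sub>0 \<in> K" and J\<^sub>0: "set (zip (as ! ?m) (bs ! ?m)) \<subseteq> B J\<^sub>0"
    using finite_subset_Union_directed[of "B ` K" "set (zip (as ! ?m) (bs ! ?m))"] by auto
  let ?Q = "{comm_pair t (Suc ?m) as bs s | s. \<not> (\<forall>i<?m. s i)}"
  have "?Q \<subseteq> \<Union>(\<Gamma> ` K)"
  proof
    fix q assume "q \<in> ?Q"
    then obtain s where "\<not> (\<forall>i<?m. s i)" "q = comm_pair t (Suc ?m) as bs s" by blast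
    with hyps[of s] show "q \<in> \<Union>(\<Gamma> ` K)" by simp
  qed
  then have "\<exists>X\<in>\<Gamma> ` K. ?Q \<subseteq> X"
    by (intro finite_subset_Union_directed \<open>directed (\<Gamma> ` K)\<close> \<open>\<Gamma> ` K \<noteq> {}\<close> finite_comm_pairs)
  then obtain J\<^sub>1 where "J\<^sub>1 \<in> K" and J\<^sub>1: "?Q \<subseteq> \<Gamma> J\<^sub>1" by blast
  obtain J where "J \<in> K" "J\<^sub>0 \<subseteq> J" "J\<^sub>1 \<subseteq> J"
    using \<open>directed K\<close> \<open>J\<^sub>0 \<in> K\<close> \<open>J\<^sub>1 \<in> K\<close> unfolding directed_def by blast
  then have "B J\<^sub>0 \<subseteq> B J" "\<Gamma> J\<^sub>1 \<subseteq> \<Gamma> J"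
    using \<open>J\<^sub>0 \<in> K\<close> \<open>J\<^sub>1 \<in> K\<close> \<open>mono_on K B\<close> \<open>mono_on K \<Gamma>\<close> by (auto dest: mono_onD)
  have "list_all2 (\<lambda>x y. (x, y) \<in> B J) (as ! ?m) (bs ! ?m)"
    using last J\<^sub>0 \<open>B J\<^sub>0 \<subseteq> B J\<close> by (auto simp: list_all2_iff)
  then have "comm_tuples A (alphas @ [B J]) as bs"
    by (rule comm_tuples_snoc_replace[OF tuples])
  moreover have "comm_pair t (Suc ?m) as bs s \<in> \<Gamma> J" if "\<not> (\<forall>i<?m. s i)" for s
    using that J\<^sub>1 \<open>\<Gamma> J\<^sub>1 \<subseteq> \<Gamma> J\<close> by blast
  ultimately have "comm_pair t (Suc ?m) as bs (\<lambda>_. True) \<in> \<Gamma> J"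
    using centralizesD[of A ar F "alphas @ [B J]" "\<Gamma> J" as bs t] cen \<open>J \<in> K\<close> t by simp
  with \<open>J \<in> K\<close> show "comm_pair t (length (alphas @ [\<beta>])) as bs (\<lambda>_. True) \<in> \<Union>(\<Gamma> ` K)"
    by auto
qed

lemma hcomm_le_cg_join_directed:
  fixes K :: "'j set set" and B :: "'j set \<Rightarrow> 'a rel"
  assumes "directed K" and "K \<noteq> {}" and "mono_on K B" and "\<beta> \<subseteq> \<Union>(B ` K)"
  shows "hcomm A ar F (alphas @ [\<beta>]) \<subseteq> cg_join A ar F ((\<lambda>J. hcomm A ar F (alphas @ [B J])) ` K)"
proof -
  let ?\<Gamma> = "\<lambda>J. hcomm A ar F (alphas @ [B J])"
  have "mono_on K ?\<Gamma>"
  proof (rule mono_onI)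
    show "?\<Gamma> J \<le> ?\<Gamma> J'" if "J \<in> K" "J' \<in> K" "J \<le> J'" for J J'
      using that by (intro hcomm_mono_last mono_onD[OF \<open>mono_on K B\<close>])
  qed
  show ?thesis
  proof (cases "\<forall>J\<in>K. congruence A ar F (?\<Gamma> J)")
    case True
    have "congruence A ar F (\<Union>(?\<Gamma> ` K))"
      using True \<open>K \<noteq> {}\<close>
      by (intro congruence_Union_directed directed_image_mono_on[OF \<open>directed K\<close> \<open>mono_on K ?\<Gamma>\<close>])
        auto
    moreover have "centralizes A ar F (alphas @ [\<beta>]) (\<Union>(?\<Gamma> ` K))"
      using assms \<open>mono_on K ?\<Gamma>\<close>
      by (intro centralizes_Union_directed[of K B ?\<Gamma>]) (auto simp: centralizes_hcomm)
    ultimately have "hcomm A ar F (alphas @ [\<beta>]) \<subseteq> \<Union>(?\<Gamma> ` K)"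
      unfolding hcomm_def[of A ar F "alphas @ [\<beta>]"] by blast
    also have "\<dots> \<subseteq> cg_join A ar F (?\<Gamma> ` K)" by (rule cg_join_upper)
    finally show ?thesis .
  next
    case False
    then obtain J where "J \<in> K" "?\<Gamma> J = UNIV" using hcomm_congruence_or_UNIV by blast
    then have "cg_join A ar F (?\<Gamma> ` K) = UNIV" using cg_join_upper[of "?\<Gamma> ` K" A ar F] by blast
    then show ?thesis by simp
  qed
qed

lemma cg_join_hcomm_le:
  assumes "\<forall>J\<in>K. B J \<subseteq> \<beta>"
  shows "cg_join A ar F ((\<lambda>J. hcomm A ar F (alphas @ [B J])) ` K) \<subseteq> hcomm A ar F (alphas @ [\<beta>])"
  unfolding hcomm_def[of A ar F "alphas @ [\<beta>]"]
proof (rule Inter_greatest)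
  fix \<gamma> assume "\<gamma> \<in> {\<gamma>. congruence A ar F \<gamma> \<and> centralizes A ar F (alphas @ [\<beta>]) \<gamma>}"
  then have cong: "congruence A ar F \<gamma>" and cen: "centralizes A ar F (alphas @ [\<beta>]) \<gamma>" by auto
  have "hcomm A ar F (alphas @ [B J]) \<subseteq> \<gamma>" if "J \<in> K" for J
    using that assms centralizes_antimono_last[OF _ cen] cong unfolding hcomm_def by blast
  then show "cg_join A ar F ((\<lambda>J. hcomm A ar F (alphas @ [B J])) ` K) \<subseteq> \<gamma>"
    by (intro cg_join_least[OF cong]) blast
qed

theorem mainTheorem14:
  fixes A :: "'a set" and ar :: "'f \<Rightarrow> nat" and F :: "'f \<Rightarrow> 'a list \<Rightarrow> 'a"
    and alphas :: "'a rel list" and \<rho> :: "'i \<Rightarrow> 'a rel" and I :: "'i set"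
  assumes "algebra A ar F"
    and "length alphas \<ge> 1"
    and "I \<noteq> {}"
    and "\<forall>\<alpha>\<in>set alphas. congruence A ar F \<alpha>"
    and "\<forall>i\<in>I. congruence A ar F (\<rho> i)"
  shows "hcomm A ar F (alphas @ [cg_join A ar F (\<rho> ` I)]) =
         cg_join A ar F {hcomm A ar F (alphas @ [cg_join A ar F (\<rho> ` J)]) | J.
                           finite J \<and> J \<noteq> {} \<and> J \<subseteq> I}"
proof -
  let ?K = "{J. finite J \<and> J \<noteq> {} \<and> J \<subseteq> I}"
  let ?B = "\<lambda>J. cg_join A ar F (\<rho> ` J)"
  let ?\<Gamma> = "\<lambda>J. hcomm A ar F (alphas @ [?B J])"
  have join: "?B I = \<Union>(?B ` ?K)"
    by (rule cg_join_eq_Union_finite[OF assms(1,3,5)])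
  have "?\<Gamma> I \<subseteq> cg_join A ar F (?\<Gamma> ` ?K)"
    using hcomm_le_cg_join_directed[OF directed_finite_subsets finite_subsets_nonempty[OF assms(3)]
        mono_on_cg_join_image] join by blast
  moreover have "cg_join A ar F (?\<Gamma> ` ?K) \<subseteq> ?\<Gamma> I"
    using join by (intro cg_join_hcomm_le) blast
  moreover have "{?\<Gamma> J | J. J \<in> ?K} = ?\<Gamma> ` ?K" by blast
  ultimately show ?thesis by simp
qed

end
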